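(* Let $L\ge 2$, $k\ge 2$ be integers, $\kappa:\{1,\dots,k-1\}\times\mathbb{N}\to\{0,\dots,L-1\}$ a map, and let $(b(n))_{n=0}^\infty$ be the $(L,k,\kappa)$-TM sequence over the letters $a_j=\exp\frac{2\pi\sqrt{-1}\,j}{L}$, $0\le j\le L-1$. Let $G(z)=\sum_{n=0}^\infty b(n)z^n$. Then for $|z|<1$, $$G(z)=\prod_{y=0}^{\infty}\Big(1+\sum_{s=1}^{k-1}\exp\frac{2\pi\sqrt{-1}\,\kappa(s,y)}{L}\,z^{sk^y}\Big).$$
   Context: $\mathbb{N}$ is the set of non-negative integers. Given pairwise distinct complex numbers $a_0,\dots,a_{L-1}$, let $f$ be the map on $\{a_0,\dots,a_{L-1}\}$ with $f(a_i)=a_{i+1}$ (indices modulo $L$), extended letterwise to finite words; $f^j$ is its $j$-fold iterate and $f^0$ the identity. Define finite words $A_0=a_0$ and $A_{n+1}=A_n\,f^{\kappa(1,n)}(A_n)\,f^{\kappa(2,n)}(A_n)\cdots f^{\kappa(k-1,n)}(A_n)$ (concatenation), so $A_n$ has length $k^n$ and is a prefix of $A_{n+1}$. The infinite word $A_\infty=\lim_{n\to\infty}A_n$, viewed as a sequence indexed from $0$, is the $(L,k,\kappa)$-TM sequence. *)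

theory Defs
  imports "HOL-Analysis.Analysis"
begin

text \<open>Words are represented by lists of letter indices i (standing for the letter a_i).
  The map f^j acts letterwise on indices by i |-> (i + j) mod L.\<close>

definition tm_shift :: "nat \<Rightarrow> nat \<Rightarrow> nat list \<Rightarrow> nat list" where
  "tm_shift L j w = map (\<lambda>i. (i + j) mod L) w"

fun tm_word :: "nat \<Rightarrow> nat \<Rightarrow> (nat \<Rightarrow> nat \<Rightarrow> nat) \<Rightarrow> nat \<Rightarrow> nat list" where
  "tm_word L k \<kappa> 0 = [0]"
| "tm_word L k \<kappa> (Suc n) =
     tm_word L k \<kappa> n @ concat (map (\<lambda>s. tm_shift L (\<kappa> s n) (tm_word L k \<kappa> n)) [1..<k])"

text \<open>The (L,k,kappa)-TM sequence over letters a: the m-th letter of the limit word,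
  read off from any A_n that is long enough (the first one).\<close>
definition tm_seq :: "(nat \<Rightarrow> complex) \<Rightarrow> nat \<Rightarrow> nat \<Rightarrow> (nat \<Rightarrow> nat \<Rightarrow> nat) \<Rightarrow> nat \<Rightarrow> complex" where
  "tm_seq a L k \<kappa> m =
     a (tm_word L k \<kappa> (LEAST n. m < length (tm_word L k \<kappa> n)) ! m)"

end

theory Submission
  imports Defs
begin

text \<open>The word A_N encodes the coefficients of the partial product of the first N factors:
  splitting A_(N+1) into its k blocks of length k^N, block s is A_N shifted by \<kappa>(s,N), i.e.
  multiplied letterwise by the root of unity of index \<kappa>(s,N), and starts at position s k^N.
  Hence the polynomial with coefficient word A_(N+1) is that of A_N times the N-th factor.
  The power series converges since its coefficients are unimodular, the product converges
  absolutely since its N-th factor differs from 1 by O(|z|^N), and the partial sums along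
  the subsequence k^N agree with the partial products.\<close>

lemma length_tm_word: "k \<ge> 1 \<Longrightarrow> length (tm_word L k \<kappa> n) = k ^ n"
proof (induction n)
  case 0
  then show ?case by simp
next
  case (Suc n)
  have "length (tm_word L k \<kappa> (Suc n)) = k ^ n + (k - 1) * k ^ n"
    using Suc by (simp add: length_concat tm_shift_def o_def sum_list_triv)
  also have "\<dots> = k ^ Suc n"
    using Suc.prems by (cases k) (auto simp: algebra_simps)
  finally show ?case .
qed

lemma nth_concat_uniform:
  assumes "\<forall>x\<in>set xs. length x = n" "i < length xs" "j < n"
  shows "concat xs ! (i * n + j) = xs ! i ! j"
  using assms
proof (induction xs arbitrary: i)
  case Nil
  then show ?case by simp
next
  case (Cons x xs)
  then show ?case
    by (cases i) (auto simp: nth_append)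
qed

lemma nth_tm_word_Suc:
  assumes "k \<ge> 1" "s < k" "j < k ^ N"
  shows "tm_word L k \<kappa> (Suc N) ! (s * k ^ N + j) =
    (if s = 0 then tm_word L k \<kappa> N ! j else (tm_word L k \<kappa> N ! j + \<kappa> s N) mod L)"
proof (cases "s = 0")
  case True
  then show ?thesis using assms by (simp add: nth_append length_tm_word)
next
  case False
  let ?W = "tm_word L k \<kappa> N"
  let ?blocks = "map (\<lambda>s. tm_shift L (\<kappa> s N) ?W) [1..<k]"
  have "s * k ^ N + j = k ^ N + ((s - 1) * k ^ N + j)"
    using False by (cases s) auto
  then have "tm_word L k \<kappa> (Suc N) ! (s * k ^ N + j) = concat ?blocks ! ((s - 1) * k ^ N + j)"
    using assms by (simp add: nth_append length_tm_word)
  also have "\<dots> = ?blocks ! (s - 1) ! j"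
    using assms False by (intro nth_concat_uniform) (auto simp: tm_shift_def length_tm_word)
  also have "\<dots> = (?W ! j + \<kappa> s N) mod L"
    using assms False by (simp add: tm_shift_def length_tm_word)
  finally show ?thesis using False by simp
qed

lemma nth_tm_word_prefix:
  assumes "k \<ge> 1" "n \<le> N" "m < k ^ n"
  shows "tm_word L k \<kappa> N ! m = tm_word L k \<kappa> n ! m"
  using assms(2)
proof (induction N rule: dec_induct)
  case base
  then show ?case by simp
next
  case (step N)
  have "k ^ n \<le> k ^ N" using assms step by (simp add: power_increasing)
  then have "m < length (tm_word L k \<kappa> N)" using assms by (simp add: length_tm_word)
  then show ?case using step by (simp add: nth_append)
qed

lemma tm_seq_eq_nth_tm_word:
  assumes "k \<ge> 1" "m < k ^ N"
  shows "tm_seq a L k \<kappa> m = a (tm_word L k \<kappa> N ! m)"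
proof -
  let ?P = "\<lambda>n. m < length (tm_word L k \<kappa> n)"
  define n0 where "n0 = (LEAST n. ?P n)"
  have "?P N" using assms by (simp add: length_tm_word)
  then have "?P n0" "n0 \<le> N"
    unfolding n0_def by (rule LeastI, rule Least_le)
  then have "tm_word L k \<kappa> N ! m = tm_word L k \<kappa> n0 ! m"
    using assms by (intro nth_tm_word_prefix) (simp_all add: length_tm_word)
  then show ?thesis by (simp add: tm_seq_def n0_def)
qed

definition unity_root :: "nat \<Rightarrow> nat \<Rightarrow> complex" where
  "unity_root L j = exp (2 * complex_of_real pi * \<i> * of_nat j / of_nat L)"

lemma unity_root_add: "unity_root L (i + j) = unity_root L i * unity_root L j"
  by (simp add: unity_root_def add_divide_distrib distrib_left exp_add)

lemma unity_root_mod: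
  assumes "L > 0"
  shows "unity_root L (j mod L) = unity_root L j"
proof -
  have "unity_root L (L * (j div L)) = exp (of_nat (j div L) * (2 * complex_of_real pi * \<i>))"
    using assms by (simp add: unity_root_def mult_ac)
  also have "\<dots> = 1" by (simp add: exp_of_nat_mult)
  finally have "unity_root L (L * (j div L)) = 1" .
  then show ?thesis
    using unity_root_add[of L "j mod L" "L * (j div L)"] by simp
qed

lemma norm_unity_root [simp]: "norm (unity_root L j) = 1"
proof -
  have "unity_root L j = exp (\<i> * complex_of_real (2 * pi * j / L))"
    by (simp add: unity_root_def mult_ac)
  then show ?thesis by (simp only: norm_exp_i_times)
qed

definition tm_factor :: "nat \<Rightarrow> nat \<Rightarrow> (nat \<Rightarrow> nat \<Rightarrow> nat) \<Rightarrow> complex \<Rightarrow> nat \<Rightarrow> complex" where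
  "tm_factor L k \<kappa> z y = 1 + (\<Sum>s=1..k-1. unity_root L (\<kappa> s y) * z ^ (s * k ^ y))"

lemma tm_word_poly_eq_prod_tm_factor:
  assumes "k \<ge> 1" "L > 0"
  shows "(\<Sum>m<k ^ N. unity_root L (tm_word L k \<kappa> N ! m) * z ^ m) = (\<Prod>y<N. tm_factor L k \<kappa> z y)"
proof (induction N)
  case 0
  then show ?case by (simp add: unity_root_def)
next
  case (Suc N)
  define K where "K = k ^ N"
  define P where "P = (\<Sum>j<K. unity_root L (tm_word L k \<kappa> N ! j) * z ^ j)"
  define g where "g m = unity_root L (tm_word L k \<kappa> (Suc N) ! m) * z ^ m" for m
  have g_block: "g (s * K + j) = (if s = 0 then unity_root L (tm_word L k \<kappa> N ! j) * z ^ j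
      else unity_root L (\<kappa> s N) * z ^ (s * K) * (unity_root L (tm_word L k \<kappa> N ! j) * z ^ j))"
    if "s < k" "j < K" for s j
    using nth_tm_word_Suc[OF assms(1) that[unfolded K_def], of L \<kappa>] assms(2)
    by (simp add: g_def K_def unity_root_mod unity_root_add power_add mult_ac)
  have "(\<Sum>m<k ^ Suc N. g m) = (\<Sum>s<k. \<Sum>m\<in>{s * K..<s * K + K}. g m)"
    by (simp add: K_def sum.nat_group mult.commute)
  also have "\<dots> = (\<Sum>s<k. \<Sum>j<K. g (s * K + j))"
    by (simp add: sum.atLeastLessThan_shift_0 atLeast0LessThan add.commute)
  also have "\<dots> = (\<Sum>s<k. if s = 0 then P else unity_root L (\<kappa> s N) * z ^ (s * K) * P)"
    by (rule sum.cong) (auto simp: g_block P_def sum_distrib_left)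
  also have "{..<k} = insert 0 {1..k-1}" using assms by auto
  also have "(\<Sum>s\<in>insert 0 {1..k-1}. if s = 0 then P else unity_root L (\<kappa> s N) * z ^ (s * K) * P)
      = P * tm_factor L k \<kappa> z N"
    by (simp add: tm_factor_def K_def sum_distrib_left sum_distrib_right algebra_simps)
  finally show ?case using Suc by (simp add: g_def P_def K_def)
qed

lemma summable_bounded_coeffs_power_series:
  fixes c :: "nat \<Rightarrow> 'a::{real_normed_div_algebra, banach}"
  assumes "\<And>n. norm (c n) \<le> 1" "norm z < 1"
  shows "summable (\<lambda>n. c n * z ^ n)"
proof (rule summable_comparison_test)
  show "\<exists>N. \<forall>n\<ge>N. norm (c n * z ^ n) \<le> norm z ^ n"
    using assms(1) by (simp add: norm_mult norm_power mult_left_le_one_le)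
  show "summable (\<lambda>n. norm z ^ n)" using assms(2) by simp
qed

lemma norm_tm_factor_minus_one_le:
  assumes "k \<ge> 2" "norm z < 1"
  shows "norm (tm_factor L k \<kappa> z y - 1) \<le> of_nat (k - 1) * norm z ^ y"
proof -
  have "norm (tm_factor L k \<kappa> z y - 1) \<le> (\<Sum>s=1..k-1. norm (unity_root L (\<kappa> s y) * z ^ (s * k ^ y)))"
    unfolding tm_factor_def by (simp add: norm_sum)
  also have "\<dots> \<le> (\<Sum>s=1..k-1. norm z ^ y)"
  proof (rule sum_mono)
    fix s assume s: "s \<in> {1..k-1}"
    have "y < 2 ^ y" by (rule less_exp)
    also have "\<dots> \<le> k ^ y" using assms(1) by (simp add: power_mono)
    also have "\<dots> \<le> s * k ^ y" using s by simp
    finally have "norm z ^ (s * k ^ y) \<le> norm z ^ y"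
      using assms(2) by (intro power_decreasing) auto
    then show "norm (unity_root L (\<kappa> s y) * z ^ (s * k ^ y)) \<le> norm z ^ y"
      by (simp add: norm_mult norm_power)
  qed
  finally show ?thesis by simp
qed

lemma convergent_prod_geometric:
  fixes f :: "nat \<Rightarrow> 'a::{real_normed_div_algebra, complete_space, comm_ring_1}"
  assumes "\<And>n. norm (f n - 1) \<le> C * r ^ n" "0 \<le> r" "r < 1"
  shows "convergent_prod f"
proof -
  have "\<exists>N. \<forall>n\<ge>N. norm (norm (f n - 1)) \<le> C * r ^ n"
    using assms(1) by simp
  moreover have "summable (\<lambda>n. C * r ^ n)"
    using assms(2,3) by (intro summable_mult summable_geometric) simp
  ultimately have "summable (\<lambda>n. norm (f n - 1))"
    by (rule summable_comparison_test)
  then show ?thesis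
    by (intro abs_convergent_prod_imp_convergent_prod summable_imp_abs_convergent_prod)
qed

lemma has_prod_suminf_if_partial_sums_eq:
  fixes f g :: "nat \<Rightarrow> 'a::real_normed_field"
  assumes "convergent_prod f" "summable g" "strict_mono r"
    and "\<And>N. (\<Sum>m<r N. g m) = (\<Prod>y<N. f y)"
  shows "f has_prod suminf g"
proof -
  have "(\<lambda>N. \<Prod>y<N. f y) \<longlonglongrightarrow> prodinf f"
    by (rule LIMSEQ_imp_Suc)
      (use convergent_prod_LIMSEQ[OF assms(1)] in \<open>simp add: lessThan_Suc_atMost\<close>)
  then have "(\<lambda>N. \<Sum>m<r N. g m) \<longlonglongrightarrow> prodinf f"
    by (simp add: assms(4))
  moreover have "(\<lambda>N. \<Sum>m<r N. g m) \<longlonglongrightarrow> suminf g"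
    using LIMSEQ_subseq_LIMSEQ[OF summable_LIMSEQ[OF assms(2)] assms(3)] by (simp add: o_def)
  ultimately have "prodinf f = suminf g" by (rule LIMSEQ_unique)
  with assms(1) show ?thesis by (simp add: has_prod_iff)
qed

theorem lemma2p3:
  fixes L k :: nat and \<kappa> :: "nat \<Rightarrow> nat \<Rightarrow> nat" and z :: complex
  assumes "L \<ge> 2" and "k \<ge> 2"
    and "\<And>s y. 1 \<le> s \<Longrightarrow> s \<le> k - 1 \<Longrightarrow> \<kappa> s y < L"
    and "norm z < 1"
  defines "b \<equiv> tm_seq (\<lambda>j. exp (2 * complex_of_real pi * \<i> * of_nat j / of_nat L)) L k \<kappa>"
  shows "summable (\<lambda>n. b n * z ^ n)
    \<and> (\<lambda>y. 1 + (\<Sum>s=1..k-1. exp (2 * complex_of_real pi * \<i> * of_nat (\<kappa> s y) / of_nat L)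
                              * z ^ (s * k ^ y)))
        has_prod (\<Sum>n. b n * z ^ n)"
proof -
  have b_eq: "b m = unity_root L (tm_word L k \<kappa> N ! m)" if "m < k ^ N" for m N
    using tm_seq_eq_nth_tm_word[of k m N] that assms(2)
    by (simp add: b_def unity_root_def [abs_def])
  have "norm (b n) = 1" for n
  proof -
    have "n < k ^ n"
      using less_exp[of n] power_mono[of 2 k n] assms(2) by linarith
    then show ?thesis by (simp add: b_eq)
  qed
  then have summable: "summable (\<lambda>n. b n * z ^ n)"
    using assms(4) by (intro summable_bounded_coeffs_power_series) simp_all
  have "convergent_prod (tm_factor L k \<kappa> z)"
    using norm_tm_factor_minus_one_le[OF assms(2,4)] assms(4)
    by (intro convergent_prod_geometric) auto
  moreover note summable
  moreover have "strict_mono (\<lambda>N. k ^ N)"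
    using assms(2) by (intro strict_monoI power_strict_increasing) auto
  moreover have "(\<Sum>m<k ^ N. b m * z ^ m) = (\<Prod>y<N. tm_factor L k \<kappa> z y)" for N
    using tm_word_poly_eq_prod_tm_factor[where N = N and \<kappa> = \<kappa> and z = z] assms(1,2) b_eq[of _ N]
    by simp
  ultimately have "tm_factor L k \<kappa> z has_prod (\<Sum>n. b n * z ^ n)"
    by (rule has_prod_suminf_if_partial_sums_eq)
  with summable show ?thesis
    unfolding tm_factor_def [abs_def] unity_root_def by (rule conjI)
qed

end
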